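(* Let $N\ge1$ and $n\ge1$ be integers, $\phi>0$, $L>0$, and $0<\eta_0\le\eta_1\le\dots\le\eta_N$. For $t\in[N]$ let $a_t\in\mathbb{R}^n$ with $\|a_t\|_2\le L$, and for $t\in\{0,1,\dots,N\}$ define $A_t=\eta_tI+\phi\sum_{\tau=1}^{t}a_\tau a_\tau^\top$. Let $d_1,\dots,d_N\in\{0,1,2,\dots\}$ be delays, $m_t=\{\tau\in[t-1]:\tau+d_\tau\ge t\}$, and $d_{\max}^{\le N}=\max_{\tau\le N}\min\{d_\tau,N-\tau\}$. Then $$\sum_{t=1}^N\|a_t\|_{A_{t-1}^{-1}}\left(\sum_{\tau\in m_t}\|a_\tau\|_{A_{t-1}^{-1}}\right)\le\frac{2n\,d_{\max}^{\le N}}{\phi}\left(\frac{\phi L^2}{\eta_0}+1\right)\ln\left(1+\frac{\phi L^2N}{\eta_0 n}\right),$$ and $$\sum_{t=1}^N\|a_t\|_{A_t^{-1}}\left(\sum_{\tau\in m_t}\|a_\tau\|_{A_t^{-1}}\right)\le\frac{2n\,d_{\max}^{\le N}}{\phi}\ln\left(1+\frac{\phi L^2N}{\eta_0 n}\right).$$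
   Context: For a positive definite matrix $A$ and $x\in\mathbb{R}^n$, $\|x\|_{A^{-1}}=\sqrt{x^\top A^{-1}x}$. $[t-1]=\{1,\dots,t-1\}$. *)

theory Defs
  imports "HOL-Analysis.Analysis"
begin

definition outer :: "real^'n \<Rightarrow> real^'n^'n" where
  "outer a = (\<chi> i j. a $ i * a $ j)"

definition inv_norm :: "real^'n^'n \<Rightarrow> real^'n \<Rightarrow> real" where
  "inv_norm A x = sqrt (x \<bullet> (matrix_inv A *v x))"

definition Amat :: "(nat \<Rightarrow> real) \<Rightarrow> real \<Rightarrow> (nat \<Rightarrow> real^'n) \<Rightarrow> nat \<Rightarrow> real^'n^'n" where
  "Amat eta phi a t = eta t *\<^sub>R mat 1 + phi *\<^sub>R (\<Sum>\<tau>\<in>{1..t}. outer (a \<tau>))"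

definition mset_delay :: "(nat \<Rightarrow> nat) \<Rightarrow> nat \<Rightarrow> nat set" where
  "mset_delay d t = {\<tau> \<in> {1..t-1}. \<tau> + d \<tau> \<ge> t}"

definition dmax :: "(nat \<Rightarrow> nat) \<Rightarrow> nat \<Rightarrow> nat" where
  "dmax d N = Max ((\<lambda>\<tau>. min (d \<tau>) (N - \<tau>)) ` {1..N})"

end

theory Submission
  imports Defs
begin

(* Let B_t be the Gram matrix with the constant regularizer eta_0.  Then A_t dominates B_t and
   A_t increases with t in the Loewner order, and inversion reverses both comparisons.  Hence in
   the delayed cross terms the norm of a_tau may be taken with respect to the matrix of time
   tau.  Then u v <= (u^2 + v^2) / 2, together with the facts that every m_t has at most d_max
   elements and every index lies in at most d_max of the sets m_t, bounds the double sum by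
   d_max * sum_t ||a_t||^2.  Writing x_t = phi ||a_t||^2 in the norm of B_(t-1), the squared
   norms are at most x_t / phi <= (1 + phi L^2 / eta_0) ln (1 + x_t) / phi for the prior
   matrices and, by Sherman-Morrison, x_t / (phi (1 + x_t)) <= ln (1 + x_t) / phi for the
   posterior ones.  Finally sum_t ln (1 + x_t) = ln det B_N - n ln eta_0 by the matrix
   determinant lemma, and AM-GM on the eigenvalues of B_N gives
   ln det B_N <= n ln (trace B_N / n). *)

section \<open>Positive definite matrices\<close>

definition symmetric_matrix :: "real^'n^'n \<Rightarrow> bool" where
  "symmetric_matrix M \<longleftrightarrow> transpose M = M"

definition pos_def :: "real^'n^'n \<Rightarrow> bool" where
  "pos_def M \<longleftrightarrow> symmetric_matrix M \<and> (\<forall>x. x \<noteq> 0 \<longrightarrow> 0 < x \<bullet> (M *v x))"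

definition inv_quad :: "real^'n^'n \<Rightarrow> real^'n \<Rightarrow> real" where
  "inv_quad M x = x \<bullet> (matrix_inv M *v x)"

lemma symmetric_matrix_inner_commute:
  "symmetric_matrix M \<Longrightarrow> x \<bullet> (M *v y) = y \<bullet> (M *v x)"
  by (metis dot_lmul_matrix inner_commute symmetric_matrix_def vector_transpose_matrix)

lemma pos_def_inner_nonneg: "pos_def M \<Longrightarrow> 0 \<le> x \<bullet> (M *v x)"
  unfolding pos_def_def by (cases "x = 0") (auto intro: less_imp_le)

lemma pos_def_invertible:
  assumes "pos_def M" shows "invertible M"
proof -
  have "M *v x = 0 \<Longrightarrow> x = 0" for x
    using assms unfolding pos_def_def by (metis inner_zero_right less_irrefl)
  then obtain B where "B ** M = mat 1" using matrix_left_invertible_ker by blast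
  then show ?thesis using invertible_left_inverse by blast
qed

lemma matrix_inv_vector_eq_iff:
  assumes "invertible M"
  shows "matrix_inv M *v y = z \<longleftrightarrow> M *v z = y"
proof -
  have "M ** matrix_inv M = mat 1 \<and> matrix_inv M ** M = mat 1"
    using assms unfolding invertible_def matrix_inv_def by (rule someI_ex)
  then show ?thesis by (metis matrix_vector_mul_assoc matrix_vector_mul_lid)
qed

lemma inv_quad_eq_inner:
  "invertible M \<Longrightarrow> M *v z = x \<Longrightarrow> inv_quad M x = x \<bullet> z"
  unfolding inv_quad_def by (metis matrix_inv_vector_eq_iff)

lemma inv_quad_nonneg:
  assumes "pos_def M" shows "0 \<le> inv_quad M x"
proof -
  obtain z where "M *v z = x" by (metis assms matrix_inv_vector_eq_iff pos_def_invertible)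
  then show ?thesis
    using inv_quad_eq_inner pos_def_inner_nonneg pos_def_invertible assms
    by (metis inner_commute)
qed

lemma inv_quad_antimono:
  assumes "pos_def M" "pos_def M'" and le: "\<And>w. w \<bullet> (M *v w) \<le> w \<bullet> (M' *v w)"
  shows "inv_quad M' x \<le> inv_quad M x"
proof -
  obtain z z' where z: "M *v z = x" and z': "M' *v z' = x"
    by (metis assms(1,2) matrix_inv_vector_eq_iff pos_def_invertible)
  have sym: "z' \<bullet> (M *v z) = z \<bullet> (M *v z')"
    using assms(1) pos_def_def symmetric_matrix_inner_commute by blast
  have "0 \<le> (z' - z) \<bullet> (M *v (z' - z))" using assms(1) by (rule pos_def_inner_nonneg)
  also have "\<dots> = z' \<bullet> (M *v z') - 2 * (z' \<bullet> x) + x \<bullet> z"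
    using sym z by (simp add: matrix_vector_mult_diff_distrib inner_diff_left inner_diff_right inner_commute)
  also have "z' \<bullet> (M *v z') \<le> x \<bullet> z'" using le[of z'] z' by (simp add: inner_commute)
  finally have "x \<bullet> z' \<le> x \<bullet> z" by (simp add: inner_commute)
  then show ?thesis
    using inv_quad_eq_inner[OF pos_def_invertible[OF assms(1)] z]
      inv_quad_eq_inner[OF pos_def_invertible[OF assms(2)] z'] by simp
qed

lemma pos_def_scaled_identity: "0 < c \<Longrightarrow> pos_def (c *\<^sub>R mat 1 :: real^'n^'n)"
  by (simp add: pos_def_def symmetric_matrix_def transpose_scalar flip: scaleR_matrix_vector_assoc)

lemma inv_quad_le_of_lower_bound:
  assumes "pos_def M" "0 < c" and lower: "\<And>w. c * (w \<bullet> w) \<le> w \<bullet> (M *v w)"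
  shows "inv_quad M x \<le> (x \<bullet> x) / c"
proof -
  have "inv_quad (c *\<^sub>R mat 1) x = x \<bullet> ((1 / c) *\<^sub>R x)"
    using assms(2) by (intro inv_quad_eq_inner pos_def_invertible pos_def_scaled_identity)
      (simp_all add: matrix_vector_mult_scaleR flip: scaleR_matrix_vector_assoc)
  moreover have "inv_quad M x \<le> inv_quad (c *\<^sub>R mat 1) x"
    using assms lower by (intro inv_quad_antimono pos_def_scaled_identity)
      (simp_all add: matrix_vector_mult_scaleR flip: scaleR_matrix_vector_assoc)
  ultimately show ?thesis by simp
qed

lemma inv_norm_mono: "inv_quad M x \<le> inv_quad M' y \<Longrightarrow> inv_norm M x \<le> inv_norm M' y"
  unfolding inv_norm_def inv_quad_def by simp

lemma inv_norm_nonneg: "pos_def M \<Longrightarrow> 0 \<le> inv_norm M x"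
  using inv_quad_nonneg unfolding inv_norm_def inv_quad_def by simp

lemma inv_norm_squared: "pos_def M \<Longrightarrow> (inv_norm M x)\<^sup>2 = inv_quad M x"
  using inv_quad_nonneg unfolding inv_norm_def inv_quad_def by simp

section \<open>Rank-one updates\<close>

lemma outer_matrix_vector_mult: "outer a *v x = (a \<bullet> x) *\<^sub>R a"
  by (simp add: outer_def vec_eq_iff matrix_vector_mult_def inner_vec_def
      sum_distrib_left sum_distrib_right mult_ac)

lemma det_axis_rows_but_one:
  fixes v :: "real^'n"
  shows "det (\<chi> i. if i = k then v else axis i 1) = v $ k"
proof -
  define A :: "real^'n^'n" where "A = (\<chi> i. if i = k then v $ k *s axis k 1 else axis i 1)"
  define x where "x = (\<Sum>j\<in>UNIV - {k}. v $ j *s axis j (1::real))"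
  have "x \<in> vec.span {row j A |j. j \<noteq> k}"
    unfolding x_def
  proof (rule vec.span_sum)
    fix j assume "j \<in> UNIV - {k}"
    then have "axis j 1 \<in> {row j A |j. j \<noteq> k}"
      by (intro CollectI exI[of _ j]) (simp add: row_def A_def vec_eq_iff)
    then show "v $ j *s axis j 1 \<in> vec.span {row j A |j. j \<noteq> k}"
      by (intro vec.span_scale vec.span_base)
  qed
  then have "det (\<chi> i. if i = k then row k A + x else row i A) = det A"
    by (rule det_row_span)
  moreover have "row k A + x = v"
    unfolding x_def by (simp add: row_def A_def vec_eq_iff axis_def sum_component sum.remove[of UNIV k]
        if_distrib cong: if_cong)
  then have "(\<chi> i. if i = k then row k A + x else row i A) = (\<chi> i. if i = k then v else axis i 1)"
    by (simp add: row_def A_def vec_eq_iff)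
  moreover have "det A = v $ k"
    by (subst det_diagonal) (auto simp: A_def axis_def prod.remove[of UNIV k])
  ultimately show ?thesis by simp
qed

lemma det_axis_rows_plus_multiples:
  fixes v :: "real^'n"
  assumes "k \<notin> S"
  shows "det (\<chi> i. if i = k then v else if i \<in> S then axis i 1 + c i *s v else axis i 1) = v $ k"
  using assms
proof (induction S rule: infinite_finite_induct)
  case (infinite S) then show ?case by simp
next
  case empty then show ?case by (simp only: empty_iff if_False) (rule det_axis_rows_but_one)
next
  case (insert j S)
  define A :: "real^'n^'n" where
    "A = (\<chi> i. if i = k then v else if i \<in> insert j S then axis i 1 + c i *s v else axis i 1)"
  have "j \<noteq> k" using insert by auto
  then have "det (\<chi> i. if i = j then row j A + (- c j) *s row k A else row i A) = det A"
    by (rule det_row_operation)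
  moreover have "(\<chi> i. if i = j then row j A + (- c j) *s row k A else row i A)
      = (\<chi> i. if i = k then v else if i \<in> S then axis i 1 + c i *s v else axis i 1)"
    using insert \<open>j \<noteq> k\<close> by (auto simp: row_def A_def vec_eq_iff)
  ultimately show ?case using insert A_def by auto
qed

lemma det_axis_rows_plus_rank_one:
  fixes u v :: "real^'n"
  shows "det (\<chi> i. if i \<in> T then axis i 1 + u $ i *s v else axis i 1) = 1 + (\<Sum>i\<in>T. u $ i * v $ i)"
proof (induction T rule: infinite_finite_induct)
  case (infinite T) then show ?case by simp
next
  case empty
  have "(\<chi> i. axis i 1) = (mat 1 :: real^'n^'n)" by (simp add: vec_eq_iff mat_def axis_def)
  then show ?case by simp
next
  case (insert k T)
  define C where "C i = (if i \<in> T then axis i 1 + u $ i *s v else axis i (1::real))" for i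
  have split: "(\<chi> i. if i \<in> insert k T then axis i 1 + u $ i *s v else axis i 1)
      = (\<chi> i. if i = k then axis k 1 + u $ k *s v else C i)"
    by (simp add: C_def vec_eq_iff)
  have "(\<chi> i. if i = k then axis k 1 else C i) = (\<chi> i. if i \<in> T then axis i 1 + u $ i *s v else axis i 1)"
    using insert by (simp add: C_def vec_eq_iff)
  moreover have "det (\<chi> i. if i = k then v else C i) = v $ k"
    unfolding C_def using det_axis_rows_plus_multiples[of k T v "\<lambda>i. u $ i"] insert by simp
  ultimately show ?case
    unfolding split det_row_add det_row_mul using insert by simp
qed

lemma det_identity_add_rank_one:
  fixes u v :: "real^'n"
  shows "det (mat 1 + (\<chi> i j. u $ i * v $ j)) = 1 + u \<bullet> v"
proof -
  have "mat 1 + (\<chi> i j. u $ i * v $ j) = (\<chi> i. if i \<in> UNIV then axis i 1 + u $ i *s v else axis i 1)"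
    by (simp add: vec_eq_iff mat_def axis_def)
  then show ?thesis using det_axis_rows_plus_rank_one[of UNIV u v] by (simp add: inner_vec_def)
qed

lemma det_add_outer:
  fixes B :: "real^'n^'n"
  assumes "invertible B"
  shows "det (B + c *\<^sub>R outer a) = det B * (1 + c * inv_quad B a)"
proof -
  obtain z where z: "B *v z = a" by (metis assms matrix_inv_vector_eq_iff)
  have "B ** (\<chi> i j. z $ i * (c *\<^sub>R a) $ j) = (\<chi> i j. (B *v z) $ i * (c *\<^sub>R a) $ j)"
    by (simp add: vec_eq_iff matrix_matrix_mult_def matrix_vector_mult_def sum_distrib_left mult_ac)
  also have "\<dots> = c *\<^sub>R outer a"
    unfolding z by (simp add: outer_def vec_eq_iff)
  finally have "B + c *\<^sub>R outer a = B ** (mat 1 + (\<chi> i j. z $ i * (c *\<^sub>R a) $ j))"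
    by (simp add: matrix_add_ldistrib)
  then have "det (B + c *\<^sub>R outer a) = det B * (1 + z \<bullet> (c *\<^sub>R a))"
    by (simp only: det_mul det_identity_add_rank_one)
  then show ?thesis using inv_quad_eq_inner[OF assms z] by (simp add: inner_commute)
qed

lemma inv_quad_add_outer:
  fixes B :: "real^'n^'n"
  assumes "invertible B" and nz: "1 + c * inv_quad B a \<noteq> 0"
  shows "inv_quad (B + c *\<^sub>R outer a) a = inv_quad B a / (1 + c * inv_quad B a)"
proof -
  obtain z where z: "B *v z = a" by (metis assms(1) matrix_inv_vector_eq_iff)
  define s where "s = 1 / (1 + c * inv_quad B a)"
  have q: "inv_quad B a = a \<bullet> z" using inv_quad_eq_inner[OF assms(1) z] .
  have inv: "invertible (B + c *\<^sub>R outer a)"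
    using assms det_add_outer invertible_det_nz by (metis mult_eq_0_iff)
  have "(B + c *\<^sub>R outer a) *v (s *\<^sub>R z) = s *\<^sub>R (B *v z + c *\<^sub>R (outer a *v z))"
    by (simp add: matrix_vector_mult_add_rdistrib matrix_vector_mult_scaleR
        flip: scaleR_matrix_vector_assoc)
  also have "\<dots> = (s * (1 + c * inv_quad B a)) *\<^sub>R a"
    unfolding z outer_matrix_vector_mult q by (simp add: scaleR_add_right scaleR_add_left distrib_left)
  also have "\<dots> = a" using nz by (simp add: s_def)
  finally show ?thesis
    using inv_quad_eq_inner[OF inv] q by (metis inner_commute inner_scaleR_right s_def times_divide_eq_left mult_1)
qed

section \<open>Determinant and trace of a positive definite matrix\<close>

lemma quadratic_nonneg_imp_linear_coeff_zero:
  fixes b c :: real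
  assumes nonneg: "\<And>e. 0 \<le> 2 * e * b + e\<^sup>2 * c"
  shows "b = 0"
proof -
  define k where "k = \<bar>c\<bar> + 1"
  have k: "0 < k" "\<bar>c\<bar> \<le> k" by (auto simp: k_def)
  have "0 \<le> 2 * (- b / k) * b + (- b / k)\<^sup>2 * c" by (rule nonneg)
  also have "(- b / k)\<^sup>2 * c \<le> b\<^sup>2 / k"
  proof -
    have "(- b / k)\<^sup>2 * c \<le> (- b / k)\<^sup>2 * k"
      using k by (intro mult_left_mono) auto
    then show ?thesis using k by (simp add: power2_eq_square)
  qed
  finally have "0 \<le> - (b\<^sup>2 / k)" by (simp add: power2_eq_square)
  then show ?thesis using k by (simp add: divide_le_0_iff)
qed

(* w = A v - lam v lies in S and is orthogonal to v; maximality at v along v + e w forces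
   |w|^2 = 0. *)
lemma symmetric_matrix_maximizer_is_eigenvector:
  fixes A :: "real^'n^'n"
  assumes sym: "symmetric_matrix A" and S: "subspace S" "\<And>x. x \<in> S \<Longrightarrow> A *v x \<in> S"
    and v: "v \<in> S" "v \<bullet> v = 1"
    and max: "\<And>y. y \<in> S \<Longrightarrow> y \<bullet> (A *v y) \<le> (v \<bullet> (A *v v)) * (y \<bullet> y)"
  shows "A *v v = (v \<bullet> (A *v v)) *\<^sub>R v"
proof -
  define lam where "lam = v \<bullet> (A *v v)"
  define w where "w = A *v v - lam *\<^sub>R v"
  have "w \<in> S" unfolding w_def using S v by (simp add: subspace_diff subspace_scale)
  have vw: "v \<bullet> w = 0" unfolding w_def lam_def using v by (simp add: inner_diff_right)
  have wAv: "w \<bullet> (A *v v) = w \<bullet> w"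
    using vw unfolding w_def by (simp add: inner_diff_left inner_diff_right inner_commute)
  have "0 \<le> 2 * e * (- (w \<bullet> w)) + e\<^sup>2 * (lam * (w \<bullet> w) - w \<bullet> (A *v w))" for e
  proof -
    have "v + e *\<^sub>R w \<in> S" using S v \<open>w \<in> S\<close> by (simp add: subspace_add subspace_scale)
    from max[OF this] show ?thesis
      using symmetric_matrix_inner_commute[OF sym, of v w] v vw wAv
      by (simp add: lam_def[symmetric] matrix_vector_right_distrib matrix_vector_mult_scaleR
          inner_add_left inner_add_right inner_commute power2_eq_square algebra_simps)
  qed
  then have "- (w \<bullet> w) = 0" by (rule quadratic_nonneg_imp_linear_coeff_zero)
  then show ?thesis by (simp add: w_def lam_def)
qed

lemma symmetric_matrix_eigenvector_in_invariant_subspace: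
  fixes A :: "real^'n^'n"
  assumes sym: "symmetric_matrix A" and S: "subspace S" "\<And>x. x \<in> S \<Longrightarrow> A *v x \<in> S"
    and x: "x \<in> S" "x \<noteq> 0"
  obtains v where "v \<in> S" "norm v = 1" "A *v v = (v \<bullet> (A *v v)) *\<^sub>R v"
proof -
  let ?K = "S \<inter> sphere 0 1"
  have "compact ?K" using closed_Int_compact[OF closed_subspace[OF S(1)] compact_sphere] .
  moreover have "x /\<^sub>R norm x \<in> ?K" using x S by (simp add: subspace_scale)
  then have "?K \<noteq> {}" by blast
  moreover have "continuous_on ?K (\<lambda>y. y \<bullet> (A *v y))"
    by (intro continuous_intros continuous_on_compose2[OF matrix_vector_mult_linear_continuous_on]) auto
  ultimately obtain v where v: "v \<in> ?K" and vmax: "\<And>y. y \<in> ?K \<Longrightarrow> y \<bullet> (A *v y) \<le> v \<bullet> (A *v v)"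
    using continuous_attains_sup by (metis (no_types, lifting))
  have vv: "v \<bullet> v = 1" using v by (simp add: norm_eq_1)
  have "y \<bullet> (A *v y) \<le> (v \<bullet> (A *v v)) * (y \<bullet> y)" if "y \<in> S" for y
  proof (cases "y = 0")
    case False
    have "(1 / norm y) *\<^sub>R y \<in> ?K" using that False S by (simp add: subspace_scale)
    moreover have "((1 / norm y) *\<^sub>R y) \<bullet> (A *v ((1 / norm y) *\<^sub>R y)) = (y \<bullet> (A *v y)) / (y \<bullet> y)"
      by (simp add: matrix_vector_mult_scaleR power2_norm_eq_inner[symmetric] power2_eq_square)
    ultimately have "(y \<bullet> (A *v y)) / (y \<bullet> y) \<le> v \<bullet> (A *v v)" using vmax by metis
    then show ?thesis using False by (simp add: divide_le_eq mult.commute)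
  qed simp
  then have "A *v v = (v \<bullet> (A *v v)) *\<^sub>R v"
    using v vv by (intro symmetric_matrix_maximizer_is_eigenvector[OF sym S]) auto
  then show ?thesis using that v by auto
qed

lemma symmetric_matrix_orthonormal_eigenvectors:
  fixes A :: "real^'n^'n"
  assumes sym: "symmetric_matrix A" and "k \<le> CARD('n)"
  shows "\<exists>V. finite V \<and> card V = k \<and> pairwise orthogonal V \<and>
     (\<forall>v\<in>V. norm v = 1 \<and> A *v v = (v \<bullet> (A *v v)) *\<^sub>R v)"
  using assms(2)
proof (induction k)
  case 0 then show ?case by (intro exI[of _ "{}"]) auto
next
  case (Suc k)
  then obtain V where V: "finite V" "card V = k" "pairwise orthogonal V"
     "\<forall>v\<in>V. norm v = 1 \<and> A *v v = (v \<bullet> (A *v v)) *\<^sub>R v" by auto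
  have "dim V < DIM(real^'n)" using dim_le_card[OF order_refl V(1)] V(2) Suc(2) by simp
  then obtain x where x: "x \<noteq> 0" "\<And>y. y \<in> span V \<Longrightarrow> orthogonal x y"
    using orthogonal_to_subspace_exists by blast
  define S where "S = {y. \<forall>v\<in>V. orthogonal v y}"
  have S: "subspace S" unfolding S_def by (rule subspace_orthogonal_to_vectors)
  have "x \<in> S" unfolding S_def using x(2) span_base orthogonal_commute by blast
  have "A *v y \<in> S" if "y \<in> S" for y
  proof -
    have "v \<bullet> (A *v y) = 0" if "v \<in> V" for v
    proof -
      have "v \<bullet> (A *v y) = y \<bullet> (A *v v)" by (rule symmetric_matrix_inner_commute[OF sym])
      also have "\<dots> = (v \<bullet> (A *v v)) * (y \<bullet> v)" using V(4) \<open>v \<in> V\<close> by (metis inner_scaleR_right)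
      finally show ?thesis using \<open>y \<in> S\<close> \<open>v \<in> V\<close> by (simp add: S_def orthogonal_def inner_commute)
    qed
    then show ?thesis unfolding S_def orthogonal_def by blast
  qed
  then obtain u where u: "u \<in> S" "norm u = 1" "A *v u = (u \<bullet> (A *v u)) *\<^sub>R u"
    using symmetric_matrix_eigenvector_in_invariant_subspace[OF sym S _ \<open>x \<in> S\<close> x(1)] by blast
  have "u \<notin> V"
  proof
    assume "u \<in> V"
    then have "u \<bullet> u = 0" using u(1) by (simp add: S_def orthogonal_def)
    then show False using u(2) by simp
  qed
  moreover have "pairwise orthogonal (insert u V)"
    using V(3) u(1) unfolding S_def pairwise_insert by (auto simp: orthogonal_commute)
  ultimately show ?case using V u by (intro exI[of _ "insert u V"]) auto
qed

lemma symmetric_matrix_eigenbasis: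
  fixes A :: "real^'n^'n"
  assumes "symmetric_matrix A"
  obtains h :: "'n \<Rightarrow> real^'n" and mu :: "'n \<Rightarrow> real"
  where "\<And>i j. h i \<bullet> h j = (if i = j then 1 else 0)" "\<And>j. A *v h j = mu j *\<^sub>R h j"
proof -
  obtain V where V: "finite V" "card V = CARD('n)" "pairwise orthogonal V"
     "\<forall>v\<in>V. norm v = 1 \<and> A *v v = (v \<bullet> (A *v v)) *\<^sub>R v"
    using symmetric_matrix_orthonormal_eigenvectors[OF assms order_refl] by blast
  obtain h where h: "bij_betw h (UNIV::'n set) V"
    using finite_same_card_bij[of "UNIV::'n set" V] V by auto
  then have hV: "h j \<in> V" for j using bij_betwE by blast
  have "h i \<bullet> h j = (if i = j then 1 else 0)" for i j
    using V(3,4) hV bij_betw_imp_inj_on[OF h] unfolding pairwise_def orthogonal_def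
    by (auto simp: norm_eq_1 inj_on_def) metis
  moreover have "A *v h j = (h j \<bullet> (A *v h j)) *\<^sub>R h j" for j using V(4) hV by blast
  ultimately show ?thesis by (rule that)
qed

lemma det_trace_eq_eigenvalues:
  fixes A :: "real^'n^'n" and h :: "'n \<Rightarrow> real^'n"
  assumes orth: "\<And>i j. h i \<bullet> h j = (if i = j then 1 else 0)" and eig: "\<And>j. A *v h j = mu j *\<^sub>R h j"
  shows "det A = (\<Prod>j\<in>UNIV. mu j)" "trace A = (\<Sum>j\<in>UNIV. mu j)"
proof -
  define Q :: "real^'n^'n" where "Q = (\<chi> i j. h j $ i)"
  have "transpose Q ** Q = mat 1"
    by (simp add: vec_eq_iff matrix_matrix_mult_def transpose_def Q_def mat_def
        orth[symmetric] inner_vec_def)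
  then have oQ: "orthogonal_matrix Q" by (simp add: orthogonal_matrix)
  define D where "D = transpose Q ** (A ** Q)"
  have "A ** Q = (\<chi> i j. mu j * h j $ i)"
    using eig by (simp add: vec_eq_iff matrix_matrix_mult_def matrix_vector_mult_def Q_def)
  then have "D $ i $ j = mu j * (h i \<bullet> h j)" for i j
    by (simp add: D_def matrix_matrix_mult_def transpose_def Q_def inner_vec_def
        sum_distrib_left mult_ac)
  then have D: "D = (\<chi> i j. if i = j then mu j else 0)" using orth by (simp add: vec_eq_iff)
  have "det Q * det Q = 1"
    using det_orthogonal_matrix[OF oQ] by auto
  then have "det A = det D" by (simp add: D_def det_mul)
  also have "\<dots> = (\<Prod>j\<in>UNIV. mu j)" unfolding D by (subst det_diagonal) auto
  finally show "det A = (\<Prod>j\<in>UNIV. mu j)" .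
  have "trace D = trace (A ** (Q ** transpose Q))"
    unfolding D_def by (metis matrix_mul_assoc trace_mul_sym)
  then have "trace A = trace D" using oQ by (simp add: orthogonal_matrix_def)
  also have "\<dots> = (\<Sum>j\<in>UNIV. mu j)" unfolding D by (simp add: trace_def)
  finally show "trace A = (\<Sum>j\<in>UNIV. mu j)" .
qed

lemma pos_def_eigenvalues:
  fixes A :: "real^'n^'n"
  assumes "pos_def A"
  obtains mu :: "'n \<Rightarrow> real"
  where "\<And>j. 0 < mu j" "det A = (\<Prod>j\<in>UNIV. mu j)" "trace A = (\<Sum>j\<in>UNIV. mu j)"
proof -
  obtain h :: "'n \<Rightarrow> real^'n" and mu
    where orth: "\<And>i j. h i \<bullet> h j = (if i = j then 1 else 0)" and eig: "\<And>j. A *v h j = mu j *\<^sub>R h j"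
    using symmetric_matrix_eigenbasis assms pos_def_def by metis
  have "0 < mu j" for j
  proof -
    have "h j \<noteq> 0" using orth[of j j] by auto
    then have "0 < h j \<bullet> (A *v h j)" using assms pos_def_def by blast
    then show ?thesis using orth[of j j] by (simp add: eig)
  qed
  then show ?thesis using that det_trace_eq_eigenvalues[OF orth eig] by blast
qed

lemma pos_def_det_pos: "pos_def A \<Longrightarrow> 0 < det A"
  by (metis pos_def_eigenvalues prod_pos)

lemma pos_def_ln_det_le:
  fixes A :: "real^'n^'n"
  assumes "pos_def A"
  shows "ln (det A) \<le> CARD('n) * ln (trace A / CARD('n))"
proof -
  obtain mu :: "'n \<Rightarrow> real" where mu: "\<And>j. 0 < mu j" "det A = (\<Prod>j\<in>UNIV. mu j)"
    "trace A = (\<Sum>j\<in>UNIV. mu j)"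
    using pos_def_eigenvalues[OF assms] by blast
  have "det A powr (1 / CARD('n)) \<le> trace A / CARD('n)"
    using arith_geom_mean[of UNIV mu] mu by (simp add: less_imp_le sum_divide_distrib)
  then have "ln (det A powr (1 / CARD('n))) \<le> ln (trace A / CARD('n))"
    using pos_def_det_pos[OF assms] by (intro ln_mono) auto
  then have "ln (det A) / CARD('n) \<le> ln (trace A / CARD('n))"
    using pos_def_det_pos[OF assms] by (simp add: ln_powr)
  then show ?thesis by (simp add: divide_le_eq mult.commute)
qed

section \<open>The regularized Gram matrices\<close>

lemma Amat_matrix_vector_mult:
  "Amat e phi a t *v x = e t *\<^sub>R x + phi *\<^sub>R (\<Sum>\<tau>\<in>{1..t}. (a \<tau> \<bullet> x) *\<^sub>R a \<tau>)"
proof -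
  have "(\<Sum>\<tau>\<in>{1..t}. outer (a \<tau>)) *v x = (\<Sum>\<tau>\<in>{1..t}. outer (a \<tau>) *v x)"
    by (induction t) (simp_all add: matrix_vector_mult_add_rdistrib)
  then show ?thesis
    unfolding Amat_def
    by (simp add: matrix_vector_mult_add_rdistrib outer_matrix_vector_mult flip: scaleR_matrix_vector_assoc)
qed

lemma inner_Amat:
  "x \<bullet> (Amat e phi a t *v x) = e t * (x \<bullet> x) + phi * (\<Sum>\<tau>\<in>{1..t}. (a \<tau> \<bullet> x)\<^sup>2)"
  unfolding Amat_matrix_vector_mult
  by (simp add: inner_add_right inner_sum_right power2_eq_square inner_commute)

lemma pos_def_Amat:
  assumes "0 < e t" "0 \<le> phi" shows "pos_def (Amat e phi a t)"
  unfolding pos_def_def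
proof (intro conjI allI impI)
  show "symmetric_matrix (Amat e phi a t)"
    by (simp add: symmetric_matrix_def Amat_def vec_eq_iff transpose_def outer_def mat_def mult.commute)
  fix x :: "real^'a" assume "x \<noteq> 0"
  then show "0 < x \<bullet> (Amat e phi a t *v x)"
    unfolding inner_Amat using assms by (simp add: add_pos_nonneg sum_nonneg)
qed

lemma inner_Amat_mono:
  assumes "s \<le> t" "e s \<le> e' t" "0 \<le> phi"
  shows "w \<bullet> (Amat e phi a s *v w) \<le> w \<bullet> (Amat e' phi a t *v w)"
proof -
  have "(\<Sum>\<tau>\<in>{1..s}. (a \<tau> \<bullet> w)\<^sup>2) \<le> (\<Sum>\<tau>\<in>{1..t}. (a \<tau> \<bullet> w)\<^sup>2)"
    using assms(1) by (intro sum_mono2) auto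
  then show ?thesis
    unfolding inner_Amat using assms by (intro add_mono mult_right_mono mult_left_mono) auto
qed

lemma Amat_const_Suc:
  "Amat (\<lambda>_. c) phi a (Suc t) = Amat (\<lambda>_. c) phi a t + phi *\<^sub>R outer (a (Suc t))"
  unfolding Amat_def by (simp add: scaleR_add_right)

lemma trace_sum: "trace (sum f S) = (\<Sum>x\<in>S. trace (f x :: real^'n^'n))"
  unfolding trace_def sum_component by (rule sum.swap)

lemma trace_scaleR: "trace (c *\<^sub>R A) = c * trace (A :: real^'n^'n)"
  by (simp add: trace_def sum_distrib_left)

lemma trace_Amat:
  "trace (Amat e phi a t :: real^'n^'n) = real CARD('n) * e t + phi * (\<Sum>\<tau>\<in>{1..t}. (norm (a \<tau>))\<^sup>2)"
proof -
  have "trace (outer (a \<tau>)) = (norm (a \<tau>))\<^sup>2" for \<tau>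
    by (simp add: trace_def outer_def power2_norm_eq_inner inner_vec_def)
  then show ?thesis
    by (simp add: Amat_def trace_add trace_scaleR trace_I trace_sum)
qed

lemma ln_det_Amat_const:
  fixes a :: "nat \<Rightarrow> real^'n" and e0 phi :: real
  assumes "0 < e0" "0 \<le> phi"
  shows "ln (det (Amat (\<lambda>_. e0) phi a m))
    = CARD('n) * ln e0 + (\<Sum>t=1..m. ln (1 + phi * inv_quad (Amat (\<lambda>_. e0) phi a (t - 1)) (a t)))"
proof (induction m)
  case 0
  have "det (e0 *\<^sub>R mat 1 :: real^'n^'n) = e0 ^ CARD('n)"
    by (subst det_diagonal) (auto simp: mat_def)
  then show ?case using assms by (simp add: Amat_def ln_realpow)
next
  case (Suc m)
  let ?B = "Amat (\<lambda>_. e0) phi a m"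
  have pd: "pos_def ?B" using assms by (intro pos_def_Amat) auto
  have "0 < 1 + phi * inv_quad ?B (a (Suc m))"
    using assms inv_quad_nonneg[OF pd] by (simp add: add_pos_nonneg)
  then have "ln (det (Amat (\<lambda>_. e0) phi a (Suc m))) = ln (det ?B) + ln (1 + phi * inv_quad ?B (a (Suc m)))"
    unfolding Amat_const_Suc det_add_outer[OF pos_def_invertible[OF pd]]
    using pos_def_det_pos[OF pd] by (simp add: ln_mult)
  then show ?case using Suc by simp
qed

lemma elliptical_potential:
  fixes a :: "nat \<Rightarrow> real^'n" and e0 phi L :: real
  assumes "0 < e0" "0 \<le> phi" and bound: "\<And>t. t \<in> {1..N} \<Longrightarrow> norm (a t) \<le> L"
  shows "(\<Sum>t=1..N. ln (1 + phi * inv_quad (Amat (\<lambda>_. e0) phi a (t - 1)) (a t)))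
     \<le> CARD('n) * ln (1 + phi * L\<^sup>2 * N / (e0 * CARD('n)))"
proof -
  let ?n = "real CARD('n)" and ?B = "Amat (\<lambda>_. e0) phi a N"
  have pd: "pos_def ?B" using assms by (intro pos_def_Amat) auto
  have trace_pos: "0 < trace ?B"
    using assms by (simp add: trace_Amat add_pos_nonneg sum_nonneg)
  have "(\<Sum>\<tau>\<in>{1..N}. (norm (a \<tau>))\<^sup>2) \<le> N * L\<^sup>2"
    using sum_mono[of "{1..N}" "\<lambda>\<tau>. (norm (a \<tau>))\<^sup>2" "\<lambda>_. L\<^sup>2"] bound by (simp add: power_mono)
  then have "trace ?B \<le> ?n * e0 + phi * (N * L\<^sup>2)"
    using assms by (simp add: trace_Amat mult_left_mono)
  then have trace_le: "trace ?B / (?n * e0) \<le> 1 + phi * L\<^sup>2 * N / (e0 * ?n)"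
    using assms by (simp add: field_simps)
  have "(\<Sum>t=1..N. ln (1 + phi * inv_quad (Amat (\<lambda>_. e0) phi a (t - 1)) (a t)))
      = ln (det ?B) - ?n * ln e0"
    using ln_det_Amat_const[OF assms(1,2), of a N] by simp
  also have "\<dots> \<le> ?n * ln (trace ?B / ?n) - ?n * ln e0"
    using pos_def_ln_det_le[OF pd] by simp
  also have "\<dots> = ?n * ln (trace ?B / (?n * e0))"
    using trace_pos assms by (simp add: ln_div ln_mult algebra_simps)
  also have "\<dots> \<le> ?n * ln (1 + phi * L\<^sup>2 * N / (e0 * ?n))"
    using trace_le trace_pos assms by (intro mult_left_mono ln_mono) auto
  finally show ?thesis .
qed

section \<open>The squared weighted norms\<close>

lemma ln_add_one_ge_divide: "0 \<le> x \<Longrightarrow> x / (1 + x) \<le> ln (1 + x :: real)"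
  using ln_le_minus_one[of "1 / (1 + x)"] by (simp add: ln_div field_simps)

lemma inv_quad_Amat_le_const:
  assumes "0 < e0" "e0 \<le> e t" "0 \<le> phi"
  shows "inv_quad (Amat e phi a t) v \<le> inv_quad (Amat (\<lambda>_. e0) phi a t) v"
  using assms by (intro inv_quad_antimono pos_def_Amat inner_Amat_mono) auto

lemma inv_quad_Amat_le:
  assumes "0 < e t" "0 \<le> phi"
  shows "inv_quad (Amat e phi a t) v \<le> (v \<bullet> v) / e t"
  using assms by (intro inv_quad_le_of_lower_bound pos_def_Amat) (auto simp: inner_Amat sum_nonneg)

lemma sum_inv_quad_Amat_prior_le:
  fixes a :: "nat \<Rightarrow> real^'n" and eta :: "nat \<Rightarrow> real" and phi L :: real
  assumes "0 < phi" "0 < eta 0" and mono: "\<And>s t. s \<le> t \<Longrightarrow> t \<le> N \<Longrightarrow> eta s \<le> eta t"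
    and bound: "\<And>t. t \<in> {1..N} \<Longrightarrow> norm (a t) \<le> L"
  shows "(\<Sum>t=1..N. inv_quad (Amat eta phi a (t - 1)) (a t))
    \<le> (phi * L\<^sup>2 / eta 0 + 1) / phi * (CARD('n) * ln (1 + phi * L\<^sup>2 * N / (eta 0 * CARD('n))))"
proof -
  define B where "B = Amat (\<lambda>_. eta 0) phi a"
  define x where "x t = phi * inv_quad (B (t - 1)) (a t)" for t
  define K where "K = phi * L\<^sup>2 / eta 0"
  have term_le: "inv_quad (Amat eta phi a (t - 1)) (a t) \<le> (K + 1) / phi * ln (1 + x t)" if t: "t \<in> {1..N}" for t
  proof -
    have pd: "pos_def (B (t - 1))" unfolding B_def using assms by (intro pos_def_Amat) auto
    have x0: "0 \<le> x t" unfolding x_def using assms inv_quad_nonneg[OF pd] by simp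
    have "inv_quad (B (t - 1)) (a t) \<le> (a t \<bullet> a t) / eta 0"
      unfolding B_def by (rule inv_quad_Amat_le) (use assms in auto)
    also have "\<dots> \<le> L\<^sup>2 / eta 0"
      using bound[OF t] assms by (intro divide_right_mono)
        (auto simp: power2_norm_eq_inner[symmetric] intro!: power_mono)
    finally have "phi * inv_quad (B (t - 1)) (a t) \<le> phi * (L\<^sup>2 / eta 0)"
      using assms(1) by (intro mult_left_mono) auto
    then have "x t \<le> K" by (simp add: x_def K_def)
    have "eta 0 \<le> eta (t - 1)" using mono t by auto
    then have "inv_quad (Amat eta phi a (t - 1)) (a t) \<le> x t / phi"
      using inv_quad_Amat_le_const[OF assms(2) _ less_imp_le[OF assms(1)]] assms(1)
      by (simp add: x_def B_def)
    also have "\<dots> \<le> (1 + x t) * ln (1 + x t) / phi"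
      using ln_add_one_ge_divide[OF x0] x0 assms by (simp add: divide_right_mono field_simps)
    also have "\<dots> \<le> (K + 1) * ln (1 + x t) / phi"
      using \<open>x t \<le> K\<close> x0 assms by (intro divide_right_mono mult_right_mono) auto
    finally show ?thesis by simp
  qed
  have "(\<Sum>t=1..N. inv_quad (Amat eta phi a (t - 1)) (a t))
      \<le> (\<Sum>t=1..N. (K + 1) / phi * ln (1 + x t))"
    using term_le by (rule sum_mono)
  also have "\<dots> = (K + 1) / phi * (\<Sum>t=1..N. ln (1 + x t))" by (simp add: sum_distrib_left)
  also have "\<dots> \<le> (K + 1) / phi * (CARD('n) * ln (1 + phi * L\<^sup>2 * N / (eta 0 * CARD('n))))"
    using elliptical_potential[of "eta 0" phi N a L] assms
    by (intro mult_left_mono) (auto simp: x_def B_def K_def)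
  finally show ?thesis by (simp add: K_def)
qed

lemma sum_inv_quad_Amat_posterior_le:
  fixes a :: "nat \<Rightarrow> real^'n" and eta :: "nat \<Rightarrow> real" and phi L :: real
  assumes "0 < phi" "0 < eta 0" and mono: "\<And>s t. s \<le> t \<Longrightarrow> t \<le> N \<Longrightarrow> eta s \<le> eta t"
    and bound: "\<And>t. t \<in> {1..N} \<Longrightarrow> norm (a t) \<le> L"
  shows "(\<Sum>t=1..N. inv_quad (Amat eta phi a t) (a t))
    \<le> 1 / phi * (CARD('n) * ln (1 + phi * L\<^sup>2 * N / (eta 0 * CARD('n))))"
proof -
  define B where "B = Amat (\<lambda>_. eta 0) phi a"
  define x where "x t = phi * inv_quad (B (t - 1)) (a t)" for t
  have term_le: "inv_quad (Amat eta phi a t) (a t) \<le> 1 / phi * ln (1 + x t)" if t: "t \<in> {1..N}" for t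
  proof -
    have pd: "pos_def (B (t - 1))" unfolding B_def using assms by (intro pos_def_Amat) auto
    have x0: "0 \<le> x t" unfolding x_def using assms inv_quad_nonneg[OF pd] by simp
    have B_Suc: "B t = B (t - 1) + phi *\<^sub>R outer (a t)"
      using t Amat_const_Suc[of "eta 0" phi a "t - 1"] by (simp add: B_def)
    have "eta 0 \<le> eta t" using mono t by simp
    then have "inv_quad (Amat eta phi a t) (a t) \<le> inv_quad (B t) (a t)"
      using inv_quad_Amat_le_const[OF assms(2) _ less_imp_le[OF assms(1)]] by (simp add: B_def)
    also have "\<dots> = 1 / phi * (x t / (1 + x t))"
      unfolding B_Suc using inv_quad_add_outer[OF pos_def_invertible[OF pd]] x0 assms
      by (simp add: x_def)
    also have "\<dots> \<le> 1 / phi * ln (1 + x t)"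
      using ln_add_one_ge_divide[OF x0] assms by (intro mult_left_mono) auto
    finally show ?thesis .
  qed
  have "(\<Sum>t=1..N. inv_quad (Amat eta phi a t) (a t)) \<le> (\<Sum>t=1..N. 1 / phi * ln (1 + x t))"
    using term_le by (rule sum_mono)
  also have "\<dots> = 1 / phi * (\<Sum>t=1..N. ln (1 + x t))" by (simp add: sum_distrib_left)
  also have "\<dots> \<le> 1 / phi * (CARD('n) * ln (1 + phi * L\<^sup>2 * N / (eta 0 * CARD('n))))"
    using elliptical_potential[of "eta 0" phi N a L] assms
    by (intro mult_left_mono) (auto simp: x_def B_def)
  finally show ?thesis .
qed

section \<open>Delayed cross terms\<close>

lemma mset_delay_bounds:
  assumes "t \<le> N" "\<tau> \<in> mset_delay d t"
  shows "1 \<le> \<tau>" "\<tau> < t" "t - \<tau> \<le> dmax d N"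
proof -
  from assms(2) have \<tau>: "1 \<le> \<tau>" "\<tau> \<le> t - 1" "t \<le> \<tau> + d \<tau>" unfolding mset_delay_def by auto
  then show "1 \<le> \<tau>" "\<tau> < t" by auto
  have "min (d \<tau>) (N - \<tau>) \<le> dmax d N"
    unfolding dmax_def using \<tau> assms(1) by (intro Max_ge) auto
  then show "t - \<tau> \<le> dmax d N" using \<tau> assms(1) by linarith
qed

lemma card_mset_delay_le: "t \<le> N \<Longrightarrow> card (mset_delay d t) \<le> dmax d N"
  using card_mono[of "{t - dmax d N..<t}" "mset_delay d t"] mset_delay_bounds[of t N _ d]
  by fastforce

lemma card_mset_delay_preimage_le: "card {t \<in> {1..N}. \<tau> \<in> mset_delay d t} \<le> dmax d N"
  using card_mono[of "{\<tau> + 1..\<tau> + dmax d N}" "{t \<in> {1..N}. \<tau> \<in> mset_delay d t}"]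
    mset_delay_bounds[of _ N \<tau> d]
  by fastforce

lemma sum_mset_delay_le:
  fixes f :: "nat \<Rightarrow> real"
  assumes "\<And>\<tau>. \<tau> \<in> {1..N} \<Longrightarrow> 0 \<le> f \<tau>"
  shows "(\<Sum>t=1..N. \<Sum>\<tau>\<in>mset_delay d t. f \<tau>) \<le> dmax d N * (\<Sum>\<tau>=1..N. f \<tau>)"
proof -
  have "mset_delay d t = {\<tau> \<in> {1..N}. \<tau> \<in> mset_delay d t}" if "t \<in> {1..N}" for t
    using that mset_delay_bounds[of t N _ d] by fastforce
  then have "(\<Sum>t=1..N. \<Sum>\<tau>\<in>mset_delay d t. f \<tau>)
      = (\<Sum>t=1..N. \<Sum>\<tau>\<in>{\<tau> \<in> {1..N}. \<tau> \<in> mset_delay d t}. f \<tau>)"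
    by (intro sum.cong) auto
  also have "\<dots> = (\<Sum>\<tau>=1..N. card {t \<in> {1..N}. \<tau> \<in> mset_delay d t} * f \<tau>)"
    by (subst sum.swap_restrict) auto
  also have "\<dots> \<le> (\<Sum>\<tau>=1..N. dmax d N * f \<tau>)"
    using assms card_mset_delay_preimage_le by (intro sum_mono mult_right_mono) auto
  finally show ?thesis by (simp add: sum_distrib_left)
qed

lemma sum_delayed_products_le:
  fixes W :: "nat \<Rightarrow> real" and U :: "nat \<Rightarrow> nat \<Rightarrow> real"
  assumes W: "\<And>t. t \<in> {1..N} \<Longrightarrow> 0 \<le> W t"
    and U: "\<And>t \<tau>. t \<in> {1..N} \<Longrightarrow> \<tau> \<in> mset_delay d t \<Longrightarrow> U t \<tau> \<le> W \<tau>"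
  shows "(\<Sum>t=1..N. W t * (\<Sum>\<tau>\<in>mset_delay d t. U t \<tau>)) \<le> dmax d N * (\<Sum>t=1..N. (W t)\<^sup>2)"
proof -
  let ?D = "real (dmax d N)"
  have term_le: "W t * (\<Sum>\<tau>\<in>mset_delay d t. U t \<tau>)
      \<le> card (mset_delay d t) * (W t)\<^sup>2 / 2 + (\<Sum>\<tau>\<in>mset_delay d t. (W \<tau>)\<^sup>2) / 2"
    if t: "t \<in> {1..N}" for t
  proof -
    have "W t * (\<Sum>\<tau>\<in>mset_delay d t. U t \<tau>) \<le> (\<Sum>\<tau>\<in>mset_delay d t. W t * W \<tau>)"
      using U t W[OF t] by (simp add: sum_distrib_left mult_left_mono sum_mono)
    also have "\<dots> \<le> (\<Sum>\<tau>\<in>mset_delay d t. ((W t)\<^sup>2 + (W \<tau>)\<^sup>2) / 2)"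
      using sum_squares_bound[of "W t"] by (intro sum_mono) (simp add: field_simps)
    finally show ?thesis by (simp add: sum.distrib add_divide_distrib sum_divide_distrib)
  qed
  have "(\<Sum>t=1..N. W t * (\<Sum>\<tau>\<in>mset_delay d t. U t \<tau>))
      \<le> (\<Sum>t=1..N. card (mset_delay d t) * (W t)\<^sup>2 / 2 + (\<Sum>\<tau>\<in>mset_delay d t. (W \<tau>)\<^sup>2) / 2)"
    using term_le by (rule sum_mono)
  also have "\<dots> = (\<Sum>t=1..N. card (mset_delay d t) * (W t)\<^sup>2) / 2
      + (\<Sum>t=1..N. \<Sum>\<tau>\<in>mset_delay d t. (W \<tau>)\<^sup>2) / 2"
    by (simp add: sum.distrib sum_divide_distrib)
  also have "(\<Sum>t=1..N. card (mset_delay d t) * (W t)\<^sup>2) \<le> (\<Sum>t=1..N. ?D * (W t)\<^sup>2)"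
    using card_mset_delay_le by (intro sum_mono mult_right_mono) auto
  also have "(\<Sum>t=1..N. \<Sum>\<tau>\<in>mset_delay d t. (W \<tau>)\<^sup>2) \<le> ?D * (\<Sum>t=1..N. (W t)\<^sup>2)"
    by (rule sum_mset_delay_le) simp
  finally show ?thesis by (simp add: sum_distrib_left)
qed

lemma sum_delayed_inv_norms_le:
  fixes G :: "nat \<Rightarrow> real^'n^'n"
  assumes pd: "\<And>t. t \<in> {1..N} \<Longrightarrow> pos_def (G t)"
    and antimono: "\<And>s t v. 1 \<le> s \<Longrightarrow> s \<le> t \<Longrightarrow> t \<le> N \<Longrightarrow> inv_quad (G t) v \<le> inv_quad (G s) v"
  shows "(\<Sum>t=1..N. inv_norm (G t) (a t) * (\<Sum>\<tau>\<in>mset_delay d t. inv_norm (G t) (a \<tau>)))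
    \<le> dmax d N * (\<Sum>t=1..N. inv_quad (G t) (a t))"
proof -
  have "(\<Sum>t=1..N. inv_norm (G t) (a t) * (\<Sum>\<tau>\<in>mset_delay d t. inv_norm (G t) (a \<tau>)))
      \<le> dmax d N * (\<Sum>t=1..N. (inv_norm (G t) (a t))\<^sup>2)"
  proof (rule sum_delayed_products_le)
    fix t \<tau> assume "t \<in> {1..N}" "\<tau> \<in> mset_delay d t"
    then show "inv_norm (G t) (a \<tau>) \<le> inv_norm (G \<tau>) (a \<tau>)"
      using mset_delay_bounds[of t N \<tau> d] by (intro inv_norm_mono antimono) auto
  qed (use pd inv_norm_nonneg in blast)
  also have "(\<Sum>t=1..N. (inv_norm (G t) (a t))\<^sup>2) = (\<Sum>t=1..N. inv_quad (G t) (a t))"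
    using pd inv_norm_squared by (intro sum.cong) auto
  finally show ?thesis .
qed

theorem lemmaC1:
  fixes N :: nat and phi L :: real and eta :: "nat \<Rightarrow> real"
    and a :: "nat \<Rightarrow> real^'n" and d :: "nat \<Rightarrow> nat"
  assumes "N \<ge> 1" and "phi > 0" and "L > 0"
    and "eta 0 > 0" and "\<And>s t. s \<le> t \<Longrightarrow> t \<le> N \<Longrightarrow> eta s \<le> eta t"
    and "\<And>t. t \<in> {1..N} \<Longrightarrow> norm (a t) \<le> L"
  shows "((\<Sum>t=1..N. inv_norm (Amat eta phi a (t-1)) (a t) *
            (\<Sum>\<tau>\<in>mset_delay d t. inv_norm (Amat eta phi a (t-1)) (a \<tau>)))
         \<le> 2 * real CARD('n) * real (dmax d N) / phi * (phi * L^2 / eta 0 + 1)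
            * ln (1 + phi * L^2 * real N / (eta 0 * real CARD('n))))
       \<and> ((\<Sum>t=1..N. inv_norm (Amat eta phi a t) (a t) *
            (\<Sum>\<tau>\<in>mset_delay d t. inv_norm (Amat eta phi a t) (a \<tau>)))
         \<le> 2 * real CARD('n) * real (dmax d N) / phi
            * ln (1 + phi * L^2 * real N / (eta 0 * real CARD('n))))"
proof -
  note phi = assms(2) and eta = assms(4,5) and bound = assms(6)
  define A where "A = Amat eta phi a"
  define D where "D = real (dmax d N)"
  define P where "P = real CARD('n) * ln (1 + phi * L^2 * real N / (eta 0 * real CARD('n)))"
  have pd: "pos_def (A t)" if "t \<le> N" for t
    using eta phi that unfolding A_def by (intro pos_def_Amat) (auto intro: order.strict_trans2)
  have antimono: "inv_quad (A t) v \<le> inv_quad (A s) v" if "s \<le> t" "t \<le> N" for s t v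
    using eta phi that pd unfolding A_def by (intro inv_quad_antimono inner_Amat_mono) auto
  have "0 \<le> D" "0 \<le> P" using phi eta by (simp_all add: D_def P_def)
  have prior: "(\<Sum>t=1..N. inv_norm (A (t - 1)) (a t) * (\<Sum>\<tau>\<in>mset_delay d t. inv_norm (A (t - 1)) (a \<tau>)))
      \<le> D * ((phi * L^2 / eta 0 + 1) / phi * P)"
    unfolding D_def
    by (rule order_trans[OF sum_delayed_inv_norms_le mult_left_mono])
      (use pd antimono phi eta bound sum_inv_quad_Amat_prior_le[of phi eta N a L] in \<open>auto simp: A_def P_def\<close>)
  have posterior: "(\<Sum>t=1..N. inv_norm (A t) (a t) * (\<Sum>\<tau>\<in>mset_delay d t. inv_norm (A t) (a \<tau>)))
      \<le> D * (1 / phi * P)"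
    unfolding D_def
    by (rule order_trans[OF sum_delayed_inv_norms_le mult_left_mono])
      (use pd antimono phi eta bound sum_inv_quad_Amat_posterior_le[of phi eta N a L] in \<open>auto simp: A_def P_def\<close>)
  have "0 \<le> D * ((phi * L^2 / eta 0 + 1) / phi * P)" "0 \<le> D * (1 / phi * P)"
    using phi eta \<open>0 \<le> D\<close> \<open>0 \<le> P\<close> by simp_all
  moreover have "2 * real CARD('n) * D / phi * (phi * L^2 / eta 0 + 1)
      * ln (1 + phi * L^2 * real N / (eta 0 * real CARD('n))) = 2 * (D * ((phi * L^2 / eta 0 + 1) / phi * P))"
    "2 * real CARD('n) * D / phi * ln (1 + phi * L^2 * real N / (eta 0 * real CARD('n)))
      = 2 * (D * (1 / phi * P))"
    by (simp_all add: P_def)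
  ultimately show ?thesis
    using prior posterior unfolding A_def D_def by (smt (verit))
qed

end
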